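(* Let $\psi,\varphi$ be metric formulas, $m\in\mathbb{N}$ and $n\in\mathbb{N}\cup\{\omega\}$. Then, with respect to strict timed traces, for all $i\in[m,n)$: $$\psi\,\mathsf{U}_{[m,n)}\,\varphi\equiv(\psi\,\mathsf{U}_{[m,i)}\,\varphi)\vee(\psi\,\mathsf{U}_{[i,n)}\,\varphi),\qquad \psi\,\mathsf{R}_{[m,n)}\,\varphi\equiv(\psi\,\mathsf{R}_{[m,i)}\,\varphi)\wedge(\psi\,\mathsf{R}_{[i,n)}\,\varphi),$$ and likewise $\psi\,\mathsf{S}_{[m,n)}\,\varphi\equiv(\psi\,\mathsf{S}_{[m,i)}\,\varphi)\vee(\psi\,\mathsf{S}_{[i,n)}\,\varphi)$ and $\psi\,\mathsf{T}_{[m,n)}\,\varphi\equiv(\psi\,\mathsf{T}_{[m,i)}\,\varphi)\wedge(\psi\,\mathsf{T}_{[i,n)}\,\varphi)$.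
   Context: Write $[m,n)=\{i\in\mathbb{N}\mid m\le i<n\}$, $(m,n]=\{i\in\mathbb{N}\mid m<i\le n\}$. Metric formulas over a set of atoms $\mathcal{A}$: $\varphi::=p\mid\bot\mid\varphi_1\wedge\varphi_2\mid\varphi_1\vee\varphi_2\mid\varphi_1\to\varphi_2\mid\bullet_I\varphi\mid\varphi_1\mathsf{S}_I\varphi_2\mid\varphi_1\mathsf{T}_I\varphi_2\mid\circ_I\varphi\mid\varphi_1\mathsf{U}_I\varphi_2\mid\varphi_1\mathsf{R}_I\varphi_2$, $p\in\mathcal{A}$, $I=[m,n)$, $m\in\mathbb{N}$, $n\in\mathbb{N}\cup\{\omega\}$. A timed HT-trace of length $\lambda\in\mathbb{N}\cup\{\omega\}$ is $\mathbf{M}=(\langle\mathbf{H},\mathbf{T}\rangle,\tau)$ with $H_i\subseteq T_i\subseteq\mathcal{A}$ for $i\in[0,\lambda)$, $\tau:[0,\lambda)\to\mathbb{N}$, $\tau(0)=0$, $\tau(i)\le\tau(i+1)$; strict if $\tau(i)<\tau(i+1)$ whenever $i+1<\lambda$. Satisfaction at $k\in[0,\lambda)$: $\bot$ never; $p$ iff $p\in H_k$; $\wedge,\vee$ usual; $\varphi\to\psi$ iff for both $\mathbf{M}'=\mathbf{M}$ and $\mathbf{M}'=(\langle\mathbf{T},\mathbf{T}\rangle,\tau)$, $\mathbf{M}',k\not\models\varphi$ or $\mathbf{M}',k\models\psi$; $\bullet_I\varphi$ iff $k>0$, $\mathbf{M},k-1\models\varphi$, $\tau(k)-\tau(k-1)\in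 I$; $\varphi\mathsf{S}_I\psi$ iff for some $j\in[0,k]$ with $\tau(k)-\tau(j)\in I$, $\mathbf{M},j\models\psi$ and $\mathbf{M},i\models\varphi$ for all $i\in(j,k]$; $\varphi\mathsf{T}_I\psi$ iff for all $j\in[0,k]$ with $\tau(k)-\tau(j)\in I$, $\mathbf{M},j\models\psi$ or $\mathbf{M},i\models\varphi$ for some $i\in(j,k]$; $\circ_I\varphi$ iff $k+1<\lambda$, $\mathbf{M},k+1\models\varphi$, $\tau(k+1)-\tau(k)\in I$; $\varphi\mathsf{U}_I\psi$ iff for some $j\in[k,\lambda)$ with $\tau(j)-\tau(k)\in I$, $\mathbf{M},j\models\psi$ and $\mathbf{M},i\models\varphi$ for all $i\in[k,j)$; $\varphi\mathsf{R}_I\psi$ iff for all $j\in[k,\lambda)$ with $\tau(j)-\tau(k)\in I$, $\mathbf{M},j\models\psi$ or $\mathbf{M},i\models\varphi$ for some $i\in[k,j)$. $\alpha\equiv\beta$ (w.r.t. strict traces) means: for every strict timed HT-trace $\mathbf{M}$ of any length $\lambda$ and every $k\in[0,\lambda)$, $\mathbf{M},k\models\alpha$ iff $\mathbf{M},k\models\beta$. *)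

theory Defs
  imports Main "HOL-Library.Extended_Nat"
begin

type_synonym interval = "nat \<times> enat"

definition in_int :: "nat \<Rightarrow> interval \<Rightarrow> bool" where
  "in_int d I \<longleftrightarrow> fst I \<le> d \<and> enat d < snd I"

datatype 'a mformula =
    Atom 'a
  | Bot
  | And "'a mformula" "'a mformula"
  | Or "'a mformula" "'a mformula"
  | Impl "'a mformula" "'a mformula"
  | Prev interval "'a mformula"
  | Since interval "'a mformula" "'a mformula"
  | Trigger interval "'a mformula" "'a mformula"
  | Next interval "'a mformula"
  | Until interval "'a mformula" "'a mformula"
  | Release interval "'a mformula" "'a mformula"

text \<open>A timed HT-trace is given by H, T (states), tau (timing) and its length lam.
  Only positions i with enat i < lam are meaningful.\<close>

definition timed_ht_trace :: "(nat \<Rightarrow> 'a set) \<Rightarrow> (nat \<Rightarrow> 'a set) \<Rightarrow> (nat \<Rightarrow> nat) \<Rightarrow> enat \<Rightarrow> bool" where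
  "timed_ht_trace H T tau lam \<longleftrightarrow>
     (\<forall>i. enat i < lam \<longrightarrow> H i \<subseteq> T i) \<and> tau 0 = 0 \<and>
     (\<forall>i. enat (i+1) < lam \<longrightarrow> tau i \<le> tau (i+1))"

definition strict_trace :: "(nat \<Rightarrow> 'a set) \<Rightarrow> (nat \<Rightarrow> 'a set) \<Rightarrow> (nat \<Rightarrow> nat) \<Rightarrow> enat \<Rightarrow> bool" where
  "strict_trace H T tau lam \<longleftrightarrow> timed_ht_trace H T tau lam \<and>
     (\<forall>i. enat (i+1) < lam \<longrightarrow> tau i < tau (i+1))"

primrec sat :: "(nat \<Rightarrow> 'a set) \<Rightarrow> (nat \<Rightarrow> 'a set) \<Rightarrow> (nat \<Rightarrow> nat) \<Rightarrow> enat \<Rightarrow> nat \<Rightarrow> 'a mformula \<Rightarrow> bool" where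
  "sat H T tau lam k (Atom p) \<longleftrightarrow> p \<in> H k"
| "sat H T tau lam k Bot \<longleftrightarrow> False"
| "sat H T tau lam k (And f g) \<longleftrightarrow> sat H T tau lam k f \<and> sat H T tau lam k g"
| "sat H T tau lam k (Or f g) \<longleftrightarrow> sat H T tau lam k f \<or> sat H T tau lam k g"
| "sat H T tau lam k (Impl f g) \<longleftrightarrow>
     (\<not> sat H T tau lam k f \<or> sat H T tau lam k g) \<and>
     (\<not> sat T T tau lam k f \<or> sat T T tau lam k g)"
| "sat H T tau lam k (Prev I f) \<longleftrightarrow>
     k > 0 \<and> sat H T tau lam (k - 1) f \<and> in_int (tau k - tau (k - 1)) I"
| "sat H T tau lam k (Since I f g) \<longleftrightarrow>
     (\<exists>j\<le>k. in_int (tau k - tau j) I \<and> sat H T tau lam j g \<and>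
        (\<forall>i. j < i \<and> i \<le> k \<longrightarrow> sat H T tau lam i f))"
| "sat H T tau lam k (Trigger I f g) \<longleftrightarrow>
     (\<forall>j\<le>k. in_int (tau k - tau j) I \<longrightarrow> sat H T tau lam j g \<or>
        (\<exists>i. j < i \<and> i \<le> k \<and> sat H T tau lam i f))"
| "sat H T tau lam k (Next I f) \<longleftrightarrow>
     enat (k + 1) < lam \<and> sat H T tau lam (k + 1) f \<and> in_int (tau (k + 1) - tau k) I"
| "sat H T tau lam k (Until I f g) \<longleftrightarrow>
     (\<exists>j. k \<le> j \<and> enat j < lam \<and> in_int (tau j - tau k) I \<and> sat H T tau lam j g \<and>
        (\<forall>i. k \<le> i \<and> i < j \<longrightarrow> sat H T tau lam i f))"
| "sat H T tau lam k (Release I f g) \<longleftrightarrow>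
     (\<forall>j. k \<le> j \<and> enat j < lam \<and> in_int (tau j - tau k) I \<longrightarrow> sat H T tau lam j g \<or>
        (\<exists>i. k \<le> i \<and> i < j \<and> sat H T tau lam i f))"

definition strict_equiv :: "'a mformula \<Rightarrow> 'a mformula \<Rightarrow> bool" where
  "strict_equiv a b \<longleftrightarrow>
     (\<forall>H T tau lam k. strict_trace H T tau lam \<longrightarrow> enat k < lam \<longrightarrow>
        (sat H T tau lam k a \<longleftrightarrow> sat H T tau lam k b))"

end

theory Submission
  imports Defs
begin

(* The interval [m,n) is the union of [m,i) and [i,n), so the existential operators U and S
   turn the split into a disjunction and the universal operators R and T into a conjunction.
   The equivalences hold on every timed trace. *)

lemma in_int_split:
  assumes "m \<le> i" and "enat i \<le> n"
  shows "in_int d (m, n) \<longleftrightarrow> in_int d (m, enat i) \<or> in_int d (i, n)"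
  using assms unfolding in_int_def by (cases n) auto

context
  fixes m i :: nat and n :: enat
  assumes split_point: "m \<le> i" "enat i \<le> n"
begin

lemma sat_Until_split:
  "sat H T tau lam k (Until (m, n) f g) \<longleftrightarrow>
     sat H T tau lam k (Or (Until (m, enat i) f g) (Until (i, n) f g))"
  unfolding sat.simps in_int_split[OF split_point] by blast

lemma sat_Release_split:
  "sat H T tau lam k (Release (m, n) f g) \<longleftrightarrow>
     sat H T tau lam k (And (Release (m, enat i) f g) (Release (i, n) f g))"
  unfolding sat.simps in_int_split[OF split_point] by blast

lemma sat_Since_split:
  "sat H T tau lam k (Since (m, n) f g) \<longleftrightarrow>
     sat H T tau lam k (Or (Since (m, enat i) f g) (Since (i, n) f g))"
  unfolding sat.simps in_int_split[OF split_point] by blast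

lemma sat_Trigger_split:
  "sat H T tau lam k (Trigger (m, n) f g) \<longleftrightarrow>
     sat H T tau lam k (And (Trigger (m, enat i) f g) (Trigger (i, n) f g))"
  unfolding sat.simps in_int_split[OF split_point] by blast

end

theorem theorem3:
  fixes psi phi :: "'a mformula" and m i :: nat and n :: enat
  assumes "m \<le> i" and "enat i < n"
  shows "strict_equiv (Until (m, n) psi phi)
           (Or (Until (m, enat i) psi phi) (Until (i, n) psi phi))
       \<and> strict_equiv (Release (m, n) psi phi)
           (And (Release (m, enat i) psi phi) (Release (i, n) psi phi))
       \<and> strict_equiv (Since (m, n) psi phi)
           (Or (Since (m, enat i) psi phi) (Since (i, n) psi phi))
       \<and> strict_equiv (Trigger (m, n) psi phi)
           (And (Trigger (m, enat i) psi phi) (Trigger (i, n) psi phi))"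
proof -
  have split_point: "m \<le> i" "enat i \<le> n"
    using assms by auto
  show ?thesis
    unfolding strict_equiv_def
    by (simp only: sat_Until_split[OF split_point] sat_Release_split[OF split_point]
        sat_Since_split[OF split_point] sat_Trigger_split[OF split_point] simp_thms)
qed

end
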